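(* Let $n$ and $k$ be even integers with $1\le k<n/2$, $\gcd(n,k)=2$ and $4\nmid n$. Then (a) $\lambda\in A(n,k)$ if and only if $k^2\equiv1\pmod{n/2}$; (b) $\tau\in A(n,k)$ if and only if $k^2\equiv-1\pmod{n/2}$. Moreover, if $\lambda\in A(n,k)$ then $\lambda\in B(n,k)$, and if $\tau\in A(n,k)$ then $\tau\in B(n,k)$.
   Context: $\mathrm{DGP}(n,k)$ ($1\le k<n/2$) is the graph with vertex set $\{(u_i,j),(v_i,j): 0\le i\le n-1,\ j\in\{0,1\}\}$ and edges $\{(u_i,j),(u_{i+1},1-j)\}$, $\{(u_i,j),(v_i,1-j)\}$ (spokes, forming the set $\mathcal{S}$), $\{(v_i,j),(v_{i+k},1-j)\}$, subscripts mod $n$ (the canonical double cover of the generalized Petersen graph $\mathrm{GP}(n,k)$). $A(n,k)$ is its automorphism group and $B(n,k)$ the setwise stabilizer of $\mathcal{S}$ in $A(n,k)$. Define permutations $\lambda,\tau$ of the vertex set (subscripts mod $n$; $n$ even so parity of $i+j$ is well defined): if $i+j$ is odd, $(u_i,j)^\lambda=(v_{1+(i-k)k},j)$, $(v_i,j)^\lambda=(u_{ik},j)$; if $i+j$ is even, $(u_i,j)^\lambda=(v_{ik},j)$, $(v_i,j)^\lambda=(u_{1+(i-k)k},j)$. Similarly, if $i+j$ is odd, $(u_i,j)^\tau=(v_{-1+(i-k)k},j)$, $(v_i,j)^\tau=(u_{ik},j)$; if $i+j$ is even, $(u_i,j)^\tau=(v_{ik},j)$, $(v_i,j)^\tau=(u_{-1+(i-k)k},j)$.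 *)

theory Defs
  imports "HOL-Number_Theory.Number_Theory"
begin

text \<open>Vertices of DGP(n,k): U i j stands for (u_i, j), V i j for (v_i, j),
  with 0 <= i < n and j in {0,1}.\<close>
datatype vtx = U nat nat | V nat nat

definition dgp_verts :: "nat \<Rightarrow> vtx set" where
  "dgp_verts n = {U i j | i j. i < n \<and> j < 2} \<union> {V i j | i j. i < n \<and> j < 2}"

definition md :: "nat \<Rightarrow> int \<Rightarrow> nat" where
  "md n x = nat (x mod int n)"

definition dgp_outer :: "nat \<Rightarrow> nat \<Rightarrow> vtx set set" where
  "dgp_outer n k = {{U i j, U (md n (int i + 1)) (1 - j)} | i j. i < n \<and> j < 2}"

definition dgp_spokes :: "nat \<Rightarrow> nat \<Rightarrow> vtx set set" where
  "dgp_spokes n k = {{U i j, V i (1 - j)} | i j. i < n \<and> j < 2}"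

definition dgp_inner :: "nat \<Rightarrow> nat \<Rightarrow> vtx set set" where
  "dgp_inner n k = {{V i j, V (md n (int i + int k)) (1 - j)} | i j. i < n \<and> j < 2}"

definition dgp_edges :: "nat \<Rightarrow> nat \<Rightarrow> vtx set set" where
  "dgp_edges n k = dgp_outer n k \<union> dgp_spokes n k \<union> dgp_inner n k"

definition in_A :: "nat \<Rightarrow> nat \<Rightarrow> (vtx \<Rightarrow> vtx) \<Rightarrow> bool" where
  "in_A n k f \<longleftrightarrow> bij_betw f (dgp_verts n) (dgp_verts n) \<and>
     (\<forall>x\<in>dgp_verts n. \<forall>y\<in>dgp_verts n. {x, y} \<in> dgp_edges n k \<longleftrightarrow> {f x, f y} \<in> dgp_edges n k)"

definition in_B :: "nat \<Rightarrow> nat \<Rightarrow> (vtx \<Rightarrow> vtx) \<Rightarrow> bool" where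
  "in_B n k f \<longleftrightarrow> in_A n k f \<and> (\<lambda>e. f ` e) ` dgp_spokes n k = dgp_spokes n k"

definition lam :: "nat \<Rightarrow> nat \<Rightarrow> vtx \<Rightarrow> vtx" where
  "lam n k x = (case x of
     U i j \<Rightarrow> (if odd (i + j) then V (md n (1 + (int i - int k) * int k)) j
                                else V (md n (int i * int k)) j)
   | V i j \<Rightarrow> (if odd (i + j) then U (md n (int i * int k)) j
                                else U (md n (1 + (int i - int k) * int k)) j))"

definition tau :: "nat \<Rightarrow> nat \<Rightarrow> vtx \<Rightarrow> vtx" where
  "tau n k x = (case x of
     U i j \<Rightarrow> (if odd (i + j) then V (md n (-1 + (int i - int k) * int k)) j
                                else V (md n (int i * int k)) j)
   | V i j \<Rightarrow> (if odd (i + j) then U (md n (int i * int k)) j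
                                else U (md n (-1 + (int i - int k) * int k)) j))"

end

theory Submission
  imports Defs
begin

(*
  Both maps are instances of rim_swap c (c = 1 gives lambda, c = -1 gives tau): it exchanges
  the two rims, keeps the layer j, and sends index i to i k or to c + (i - k) k according to the
  parity of i + j.  Since c is odd and k is even, the two branches land in different parity
  classes, and within a class multiplication by k is injective modulo n because gcd(n,k) = 2 and
  n/2 is odd; so rim_swap c is a permutation of the vertices.  Outer edges go to inner edges and
  spokes to spokes for every c, while an inner edge goes to a pair on the outer rim whose indices
  differ by c up to a multiple of 2 k^2 - 2 c.  Hence rim_swap c maps edges to edges iff
  2 k^2 = 2 c (mod n), i.e. k^2 = c (mod n/2), and necessity is read off the inner edge
  {(v_0,0), (v_k,1)}.  As the graph is finite, an injective map sending edges to edges (and spokes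
  to spokes) is already an automorphism (fixing the spoke set).
*)

lemma inj_on_image_family_eq:
  assumes "finite E" "E \<subseteq> Pow A" "inj_on f A" "\<And>e. e \<in> E \<Longrightarrow> f ` e \<in> E"
  shows "image f ` E = E"
proof (rule endo_inj_surj)
  show "inj_on (image f) E"
    using inj_on_image_Pow[OF assms(3)] assms(2) by (rule inj_on_subset)
qed (use assms in auto)

lemma inj_on_image_mem_family_iff:
  assumes "finite E" "E \<subseteq> Pow A" "inj_on f A" "\<And>e. e \<in> E \<Longrightarrow> f ` e \<in> E" "X \<subseteq> A"
  shows "f ` X \<in> E \<longleftrightarrow> X \<in> E"
proof
  assume "f ` X \<in> E"
  then have "f ` X \<in> image f ` E"
    by (simp only: inj_on_image_family_eq[OF assms(1-4)])
  then obtain e where "e \<in> E" "f ` X = f ` e"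
    by blast
  moreover from \<open>e \<in> E\<close> have "e \<subseteq> A"
    using assms(2) by blast
  ultimately show "X \<in> E"
    using inj_on_image_eq_iff[OF assms(3) assms(5)] by simp
qed (fact assms(4))

lemma cong_of_diff_eq_mult:
  fixes a b x y m t :: int
  assumes "[a = b] (mod m)" "x - y = (a - b) * t"
  shows "[x = y] (mod m)"
  using assms unfolding cong_iff_dvd_diff by (simp add: dvd_mult2)

lemma cong_cmult_cancel_left:
  fixes a b c m :: int
  assumes "c \<noteq> 0"
  shows "[c * a = c * b] (mod c * m) \<longleftrightarrow> [a = b] (mod m)"
proof -
  have "c * a - c * b = c * (a - b)"
    by (simp add: right_diff_distrib)
  then show ?thesis
    using assms unfolding cong_iff_dvd_diff by simp
qed

lemma cong_even_iff:
  fixes x y m :: int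
  assumes "[x = y] (mod m)" "even m"
  shows "even x \<longleftrightarrow> even y"
proof -
  have "even (x - y)"
    using assms dvd_trans unfolding cong_iff_dvd_diff by blast
  then show ?thesis
    by simp
qed

lemma gcd_eq_2_odd_half:
  fixes n k :: int
  assumes "gcd n k = 2" "\<not> 4 dvd n"
  obtains m where "n = 2 * m" "odd m" "coprime m k"
proof -
  have "2 dvd n" "2 dvd k"
    using assms(1) gcd_dvd1[of n k] gcd_dvd2[of n k] by simp_all
  then obtain m h where n: "n = 2 * m" and k: "k = 2 * h"
    by (auto elim!: dvdE)
  have "gcd m h = 1"
    using assms(1) gcd_mult_distrib_int[of 2 m h] unfolding n k by simp
  then have "coprime m h"
    by (simp add: coprime_iff_gcd_eq_1)
  moreover have "odd m"
    using assms(2) unfolding n by presburger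
  ultimately have "coprime m k"
    unfolding k by simp
  with n \<open>odd m\<close> show ?thesis
    by (rule that)
qed

lemma cong_mult_cancel_gcd_2:
  fixes a b n k :: int
  assumes "gcd n k = 2" "\<not> 4 dvd n" "even (a - b)" "[a * k = b * k] (mod n)"
  shows "[a = b] (mod n)"
proof -
  obtain m where n: "n = m * 2" and "odd m" "coprime k m"
    using gcd_eq_2_odd_half[OF assms(1,2)] by (metis coprime_commute mult.commute)
  have "[a * k = b * k] (mod m)"
    using assms(4) unfolding n by (rule cong_modulus_mult)
  then have "[a = b] (mod m)"
    using \<open>coprime k m\<close> by (simp add: cong_mult_rcancel)
  moreover have "[a = b] (mod 2)"
    using assms(3) by (simp add: cong_iff_dvd_diff)
  moreover have "coprime m 2"
    using \<open>odd m\<close> by simp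
  ultimately show ?thesis
    unfolding n by (rule coprime_cong_mult)
qed

lemma dvd_2_if_dvd_double_square:
  fixes n k :: int
  assumes "gcd n k = 2" "\<not> 4 dvd n" "n dvd 2 * k ^ 2"
  shows "n dvd 2"
proof -
  obtain m where n: "n = 2 * m" and "coprime m k"
    using gcd_eq_2_odd_half[OF assms(1,2)] by blast
  have "m dvd k ^ 2"
    using assms(3) unfolding n by simp
  then have "\<bar>m\<bar> = 1"
    using \<open>coprime m k\<close> by (intro coprime_common_divisor_int[of m "k ^ 2"]) simp_all
  then show ?thesis
    unfolding n by (auto simp: abs_if split: if_splits)
qed

lemma md_lt: "0 < n \<Longrightarrow> md n x < n"
  unfolding md_def by (simp add: nat_less_iff)

lemma md_cong: "0 < n \<Longrightarrow> [int (md n x) = x] (mod int n)"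
  unfolding md_def cong_def by simp

lemma md_eq_iff: "0 < n \<Longrightarrow> md n x = md n y \<longleftrightarrow> [x = y] (mod int n)"
  unfolding md_def cong_def by (simp add: eq_nat_nat_iff)

lemma md_of_nat: "i < n \<Longrightarrow> md n (int i) = i"
  unfolding md_def by simp

lemma md_md_add: "0 < n \<Longrightarrow> md n (int (md n x) + z) = md n (x + z)"
  unfolding md_def by (simp add: mod_add_left_eq)

lemma even_md_iff: "0 < n \<Longrightarrow> even n \<Longrightarrow> even (md n x) \<longleftrightarrow> even x"
  unfolding md_def by (simp add: even_nat_iff dvd_mod_iff)

lemma U_in_dgp_verts [simp]: "U i j \<in> dgp_verts n \<longleftrightarrow> i < n \<and> j < 2"
  by (auto simp: dgp_verts_def)

lemma V_in_dgp_verts [simp]: "V i j \<in> dgp_verts n \<longleftrightarrow> i < n \<and> j < 2"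
  by (auto simp: dgp_verts_def)

lemma finite_dgp_verts: "finite (dgp_verts n)"
proof -
  have "dgp_verts n \<subseteq> case_prod U ` ({..<n} \<times> {..<2}) \<union> case_prod V ` ({..<n} \<times> {..<2})"
    unfolding dgp_verts_def by force
  then show ?thesis
    by (rule finite_subset) auto
qed

lemma dgp_edges_subset_Pow: "0 < n \<Longrightarrow> dgp_edges n k \<subseteq> Pow (dgp_verts n)"
  unfolding dgp_edges_def dgp_outer_def dgp_spokes_def dgp_inner_def by (auto simp: md_lt)

lemma finite_dgp_edges: "0 < n \<Longrightarrow> finite (dgp_edges n k)"
  using dgp_edges_subset_Pow finite_dgp_verts by (metis finite_Pow_iff finite_subset)

lemma dgp_spokes_subset_edges: "dgp_spokes n k \<subseteq> dgp_edges n k"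
  unfolding dgp_edges_def by blast

lemma outer_edge_md:
  assumes "0 < n" "j < 2" "[y = x + 1] (mod int n)"
  shows "{U (md n x) j, U (md n y) (1 - j)} \<in> dgp_edges n k"
proof -
  have y: "md n y = md n (int (md n x) + 1)"
    using assms by (simp add: md_md_add md_eq_iff)
  have "{U (md n x) j, U (md n y) (1 - j)} \<in> dgp_outer n k"
    unfolding dgp_outer_def y using md_lt[OF assms(1)] assms(2) by (intro CollectI exI conjI refl) auto
  then show ?thesis
    unfolding dgp_edges_def by blast
qed

lemma inner_edge_md:
  assumes "0 < n" "j < 2" "[y = x + int k] (mod int n)"
  shows "{V (md n x) j, V (md n y) (1 - j)} \<in> dgp_edges n k"
proof -
  have y: "md n y = md n (int (md n x) + int k)"
    using assms by (simp add: md_md_add md_eq_iff)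
  have "{V (md n x) j, V (md n y) (1 - j)} \<in> dgp_inner n k"
    unfolding dgp_inner_def y using md_lt[OF assms(1)] assms(2) by (intro CollectI exI conjI refl) auto
  then show ?thesis
    unfolding dgp_edges_def by blast
qed

lemma spoke_in_dgp_spokes: "i < n \<Longrightarrow> j < 2 \<Longrightarrow> {U i j, V i (1 - j)} \<in> dgp_spokes n k"
  unfolding dgp_spokes_def by blast

lemma outer_edge_md_cong:
  assumes "0 < n" "{U (md n x) 0, U (md n y) 1} \<in> dgp_edges n k"
  shows "[y = x + 1] (mod int n) \<or> [x = y + 1] (mod int n)"
proof -
  have "{U (md n x) 0, U (md n y) 1} \<in> dgp_outer n k"
    using assms(2) unfolding dgp_edges_def dgp_spokes_def dgp_inner_def
    by (auto simp: doubleton_eq_iff)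
  then obtain i j where "{U (md n x) 0, U (md n y) 1} = {U i j, U (md n (int i + 1)) (1 - j)}"
    unfolding dgp_outer_def by blast
  then have "md n y = md n (int (md n x) + 1) \<or> md n x = md n (int (md n y) + 1)"
    by (auto simp: doubleton_eq_iff)
  then show ?thesis
    using assms(1) by (simp add: md_md_add md_eq_iff)
qed

lemma in_A_if_maps_edges:
  assumes "0 < n" "bij_betw f (dgp_verts n) (dgp_verts n)"
    and "\<And>e. e \<in> dgp_edges n k \<Longrightarrow> f ` e \<in> dgp_edges n k"
  shows "in_A n k f"
  unfolding in_A_def
proof (intro conjI assms(2) ballI)
  fix x y
  assume "x \<in> dgp_verts n" "y \<in> dgp_verts n"
  then have "f ` {x, y} \<in> dgp_edges n k \<longleftrightarrow> {x, y} \<in> dgp_edges n k"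
    by (intro inj_on_image_mem_family_iff[OF finite_dgp_edges dgp_edges_subset_Pow
          bij_betw_imp_inj_on assms(3)]) (use assms(1,2) in auto)
  then show "{x, y} \<in> dgp_edges n k \<longleftrightarrow> {f x, f y} \<in> dgp_edges n k"
    by simp
qed

lemma in_B_if_maps_spokes:
  assumes "0 < n" "in_A n k f" "\<And>e. e \<in> dgp_spokes n k \<Longrightarrow> f ` e \<in> dgp_spokes n k"
  shows "in_B n k f"
  unfolding in_B_def
proof (intro conjI assms(2) inj_on_image_family_eq[OF _ _ _ assms(3)])
  show "finite (dgp_spokes n k)"
    using finite_dgp_edges[OF assms(1)] dgp_spokes_subset_edges by (rule finite_subset[rotated])
  show "dgp_spokes n k \<subseteq> Pow (dgp_verts n)"
    using dgp_edges_subset_Pow[OF assms(1)] dgp_spokes_subset_edges by blast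
  show "inj_on f (dgp_verts n)"
    using assms(2) by (simp add: in_A_def bij_betw_def)
qed

definition swap_index :: "nat \<Rightarrow> int \<Rightarrow> nat \<Rightarrow> nat \<Rightarrow> int" where
  "swap_index k c j i = (if odd (i + j) then c + (int i - int k) * int k else int i * int k)"

definition rim_swap :: "nat \<Rightarrow> nat \<Rightarrow> int \<Rightarrow> vtx \<Rightarrow> vtx" where
  "rim_swap n k c x = (case x of
     U i j \<Rightarrow> V (md n (swap_index k c j i)) j
   | V i j \<Rightarrow> U (md n (swap_index k c (Suc j) i)) j)"

lemma lam_eq_rim_swap: "lam n k = rim_swap n k 1"
  by (auto simp: fun_eq_iff lam_def rim_swap_def swap_index_def split: vtx.split)

lemma tau_eq_rim_swap: "tau n k = rim_swap n k (-1)"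
  by (auto simp: fun_eq_iff tau_def rim_swap_def swap_index_def split: vtx.split)

lemma even_swap_index_iff: "even k \<Longrightarrow> odd c \<Longrightarrow> even (swap_index k c j i) \<longleftrightarrow> even (i + j)"
  by (simp add: swap_index_def)

lemma swap_index_same_branch:
  "odd (a + j) = odd (b + j') \<Longrightarrow>
    swap_index k c j' b = swap_index k c j a + (int b - int a) * int k"
  by (simp add: swap_index_def algebra_simps)

lemma swap_index_cross_branch:
  assumes "odd (a + j) \<noteq> odd (b + j')" "[int b = int a + int k] (mod n)"
    and "[2 * int k ^ 2 = 2 * c] (mod n)"
  shows "[swap_index k c j' b = swap_index k c j a + c] (mod n)"
proof -
  have shift: "n dvd (int b - int a - int k) * int k"
    using assms(2) by (simp add: cong_iff_dvd_diff diff_diff_eq)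
  show ?thesis
  proof (cases "odd (a + j)")
    case True
    have diff: "swap_index k c j' b - (swap_index k c j a + c)
        = (int b - int a - int k) * int k + (2 * int k ^ 2 - 2 * c)"
      using True assms(1) by (simp add: swap_index_def algebra_simps power2_eq_square)
    show ?thesis
      unfolding cong_iff_dvd_diff diff using shift assms(3)[unfolded cong_iff_dvd_diff]
      by (rule dvd_add)
  next
    case False
    have diff: "swap_index k c j' b - (swap_index k c j a + c) = (int b - int a - int k) * int k"
      using False assms(1) by (simp add: swap_index_def algebra_simps)
    show ?thesis
      unfolding cong_iff_dvd_diff diff by (rule shift)
  qed
qed

lemma outer_edge_md_unit:
  assumes "0 < n" "j < 2" "c = 1 \<or> c = -1" "[y = x + c] (mod int n)"
  shows "{U (md n x) j, U (md n y) (1 - j)} \<in> dgp_edges n k"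
  using assms(3)
proof
  assume "c = 1"
  then show ?thesis
    using outer_edge_md assms(1,2,4) by simp
next
  assume "c = -1"
  have "[x = y + 1] (mod int n)"
    by (rule cong_of_diff_eq_mult[OF assms(4), where t = "-1"]) (simp add: \<open>c = -1\<close>)
  then have "{U (md n y) (1 - j), U (md n x) (1 - (1 - j))} \<in> dgp_edges n k"
    by (intro outer_edge_md[OF assms(1)]) simp_all
  moreover have "1 - (1 - j) = j"
    using assms(2) by arith
  ultimately show ?thesis
    by (simp add: insert_commute)
qed

context
  fixes n k :: nat
  assumes gcd_n_k: "gcd n k = 2" and not_4_dvd_n: "\<not> 4 dvd n" and k_less_n: "k < n"
begin

lemma n_pos: "0 < n"
  using k_less_n by simp

lemma even_n: "even n" and even_k: "even k"
  using gcd_dvd1[of n k] gcd_dvd2[of n k] gcd_n_k by simp_all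

lemma gcd_int_n_k: "gcd (int n) (int k) = 2"
  using gcd_n_k by simp

lemma not_4_dvd_int_n: "\<not> 4 dvd int n"
  using not_4_dvd_n by presburger

lemma swap_index_cong_imp_eq:
  assumes "odd c" "a < n" "b < n" "[swap_index k c j a = swap_index k c j b] (mod int n)"
  shows "a = b"
proof -
  have "even (swap_index k c j a) \<longleftrightarrow> even (swap_index k c j b)"
    using assms(4) by (rule cong_even_iff) (simp add: even_n)
  then have same_branch: "odd (a + j) = odd (b + j)"
    using even_swap_index_iff[OF even_k assms(1)] by simp
  then have "even (int a - int b)"
    by presburger
  moreover have "[int a * int k = int b * int k] (mod int n)"
    by (rule cong_of_diff_eq_mult[OF assms(4), where t = 1])
      (simp add: swap_index_same_branch[OF same_branch] algebra_simps)
  ultimately have "[int a = int b] (mod int n)"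
    using cong_mult_cancel_gcd_2[OF gcd_int_n_k not_4_dvd_int_n] by blast
  then show ?thesis
    using assms(2,3) by (metis md_eq_iff md_of_nat n_pos)
qed

lemma inj_on_rim_swap:
  assumes "odd c"
  shows "inj_on (rim_swap n k c) (dgp_verts n)"
proof (rule inj_onI)
  fix x y
  assume "x \<in> dgp_verts n" "y \<in> dgp_verts n" "rim_swap n k c x = rim_swap n k c y"
  then show "x = y"
    by (cases x; cases y)
      (auto simp: rim_swap_def md_eq_iff[OF n_pos] intro: swap_index_cong_imp_eq[OF assms])
qed

lemma bij_betw_rim_swap:
  assumes "odd c"
  shows "bij_betw (rim_swap n k c) (dgp_verts n) (dgp_verts n)"
proof -
  have "rim_swap n k c x \<in> dgp_verts n" if "x \<in> dgp_verts n" for x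
    using that md_lt[OF n_pos] by (cases x) (simp_all add: rim_swap_def)
  then have "rim_swap n k c ` dgp_verts n = dgp_verts n"
    using inj_on_rim_swap[OF assms] finite_dgp_verts by (intro endo_inj_surj) auto
  then show ?thesis
    using inj_on_rim_swap[OF assms] by (simp add: bij_betw_def)
qed

lemma rim_swap_maps_spokes:
  assumes "e \<in> dgp_spokes n k"
  shows "rim_swap n k c ` e \<in> dgp_spokes n k"
proof -
  obtain i j where "j < 2" and e: "e = {U i j, V i (1 - j)}"
    using assms unfolding dgp_spokes_def by blast
  have "odd (i + Suc (1 - j)) = odd (i + j)" "1 - (1 - j) = j"
    using \<open>j < 2\<close> by presburger+
  then have "rim_swap n k c ` e
      = {U (md n (swap_index k c j i)) (1 - j), V (md n (swap_index k c j i)) (1 - (1 - j))}"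
    unfolding e by (auto simp: rim_swap_def swap_index_def)
  also have "\<dots> \<in> dgp_spokes n k"
    by (rule spoke_in_dgp_spokes) (simp_all add: md_lt[OF n_pos])
  finally show ?thesis .
qed

lemma rim_swap_maps_edges:
  assumes "c = 1 \<or> c = -1" "[2 * int k ^ 2 = 2 * c] (mod int n)" "e \<in> dgp_edges n k"
  shows "rim_swap n k c ` e \<in> dgp_edges n k"
proof -
  from assms(3) consider
      (outer) i j where "j < 2" "e = {U i j, U (md n (int i + 1)) (1 - j)}"
    | (spoke) "e \<in> dgp_spokes n k"
    | (inner) i j where "j < 2" "e = {V i j, V (md n (int i + int k)) (1 - j)}"
    unfolding dgp_edges_def dgp_outer_def dgp_inner_def by blast
  then show ?thesis
  proof cases
    case (outer i j)
    define i' where "i' = md n (int i + 1)"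
    have "odd (i + j) = odd (i' + (1 - j))"
      using even_md_iff[OF n_pos even_n, of "int i + 1"] \<open>j < 2\<close> unfolding i'_def by presburger
    then have step: "swap_index k c (1 - j) i' = swap_index k c j i + (int i' - int i) * int k"
      by (rule swap_index_same_branch)
    have "[swap_index k c (1 - j) i' = swap_index k c j i + int k] (mod int n)"
      by (rule cong_of_diff_eq_mult[OF md_cong[OF n_pos, of "int i + 1", folded i'_def],
            where t = "int k"]) (unfold step, simp add: algebra_simps)
    then show ?thesis
      using inner_edge_md[OF n_pos \<open>j < 2\<close>] outer(2)
      by (simp add: rim_swap_def i'_def)
  next
    case spoke
    then show ?thesis
      using rim_swap_maps_spokes dgp_spokes_subset_edges by blast
  next
    case (inner i j)
    define i' where "i' = md n (int i + int k)"
    have "[int i' = int i + int k] (mod int n)"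
      unfolding i'_def by (rule md_cong[OF n_pos])
    moreover have "odd (i + Suc j) \<noteq> odd (i' + Suc (1 - j))"
      using even_md_iff[OF n_pos even_n, of "int i + int k"] even_k \<open>j < 2\<close>
      unfolding i'_def by presburger
    ultimately have "[swap_index k c (Suc (1 - j)) i' = swap_index k c (Suc j) i + c] (mod int n)"
      using swap_index_cross_branch assms(2) by blast
    then show ?thesis
      using outer_edge_md_unit[OF n_pos \<open>j < 2\<close> assms(1)] inner(2)
      by (simp add: rim_swap_def i'_def)
  qed
qed

lemma in_B_rim_swap:
  assumes "c = 1 \<or> c = -1" "[2 * int k ^ 2 = 2 * c] (mod int n)"
  shows "in_B n k (rim_swap n k c)"
proof (rule in_B_if_maps_spokes[OF n_pos _ rim_swap_maps_spokes])
  have "odd c"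
    using assms(1) by auto
  then show "in_A n k (rim_swap n k c)"
    using in_A_if_maps_edges[OF n_pos bij_betw_rim_swap rim_swap_maps_edges[OF assms]] by blast
qed

lemma cong_if_in_A_rim_swap:
  assumes "c = 1 \<or> c = -1" "in_A n k (rim_swap n k c)"
  shows "[2 * int k ^ 2 = 2 * c] (mod int n)"
proof -
  have "{V (md n 0) 0, V (md n (int k)) (1 - 0)} \<in> dgp_edges n k"
    by (rule inner_edge_md[OF n_pos]) simp_all
  then have "{V 0 0, V k 1} \<in> dgp_edges n k"
    using md_of_nat[OF n_pos] md_of_nat[OF k_less_n] by simp
  then have "{rim_swap n k c (V 0 0), rim_swap n k c (V k 1)} \<in> dgp_edges n k"
    using assms(2) n_pos k_less_n unfolding in_A_def by simp
  moreover have "rim_swap n k c (V 0 0) = U (md n (c - int k ^ 2)) 0"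
    and "rim_swap n k c (V k 1) = U (md n (int k ^ 2)) 1"
    using even_k by (simp_all add: rim_swap_def swap_index_def power2_eq_square)
  ultimately have "[int k ^ 2 = (c - int k ^ 2) + 1] (mod int n)
      \<or> [c - int k ^ 2 = int k ^ 2 + 1] (mod int n)"
    using outer_edge_md_cong[OF n_pos] by simp
  moreover have "2 * int k ^ 2 - (c + 1) = (int k ^ 2 - (c - int k ^ 2 + 1)) * 1"
    and "2 * int k ^ 2 - (c - 1) = (c - int k ^ 2 - (int k ^ 2 + 1)) * -1"
    by (simp_all add: algebra_simps)
  ultimately have "[2 * int k ^ 2 = c + 1] (mod int n) \<or> [2 * int k ^ 2 = c - 1] (mod int n)"
    using cong_of_diff_eq_mult by blast
  then consider "[2 * int k ^ 2 = 2 * c] (mod int n)" | "int n dvd 2 * int k ^ 2"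
    using assms(1) by (auto simp: cong_0_iff)
  then show ?thesis
  proof cases
    case 1
    then show ?thesis .
  next
    case 2
    then have "int n dvd 2"
      by (rule dvd_2_if_dvd_double_square[OF gcd_int_n_k not_4_dvd_int_n])
    moreover have "2 dvd 2 * int k ^ 2 - 2 * c"
      by (rule dvd_diff) simp_all
    ultimately show ?thesis
      unfolding cong_iff_dvd_diff by (rule dvd_trans)
  qed
qed

end

theorem lemma5p3:
  fixes n k :: nat
  assumes "even n" and "even k" and "1 \<le> k" and "2 * k < n"
    and "gcd n k = 2" and "\<not> 4 dvd n"
  shows "(in_A n k (lam n k) \<longleftrightarrow> [int k ^ 2 = 1] (mod int n div 2))
       \<and> (in_A n k (tau n k) \<longleftrightarrow> [int k ^ 2 = -1] (mod int n div 2))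
       \<and> (in_A n k (lam n k) \<longrightarrow> in_B n k (lam n k))
       \<and> (in_A n k (tau n k) \<longrightarrow> in_B n k (tau n k))"
proof -
  have "k < n"
    using assms(4) by simp
  have halve: "[2 * int k ^ 2 = 2 * c] (mod int n) \<longleftrightarrow> [int k ^ 2 = c] (mod int n div 2)" for c
    using cong_cmult_cancel_left[of 2 "int k ^ 2" c "int n div 2"] assms(1) by simp
  have in_A_iff: "in_A n k (rim_swap n k c) \<longleftrightarrow> [int k ^ 2 = c] (mod int n div 2)"
    and in_A_imp_in_B: "in_A n k (rim_swap n k c) \<longrightarrow> in_B n k (rim_swap n k c)"
    if "c = 1 \<or> c = -1" for c
    using cong_if_in_A_rim_swap[OF assms(5,6) \<open>k < n\<close> that] in_B_rim_swap[OF assms(5,6) \<open>k < n\<close> that]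
    unfolding halve[symmetric] in_B_def by blast+
  show ?thesis
    unfolding lam_eq_rim_swap tau_eq_rim_swap using in_A_iff in_A_imp_in_B by simp
qed

end
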